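(* Let $M\in\{0,1\}^{m\times n}$ be the incidence matrix of a simple graph, let $c\in\mathbb Z^n$, and let $r\in\mathbb Z^m$. Let $z^{(1)},\dots,z^{(\ell)}\in\mathbb Z^m$ with $z^{(k)}\equiv r\pmod 2$ for all $k$. Let $\lambda^{(1)},\dots,\lambda^{(\ell)}\ge0$ be reals with $\sum_k\lambda^{(k)}=1$, and suppose $z:=\sum_k\lambda^{(k)}z^{(k)}$ is an integer vector with $z\equiv r\pmod2$. Then \[ f_{c,M}(z)\le\sum_{k\in[\ell]}\lambda^{(k)}f_{c,M}(z^{(k)}). \]
   Context: $f_{c,M}(z)=\min\{c^\top x\mid Mx=z,\ x\in\mathbb Z^n_{\ge0}\}$, with value $\infty$ if infeasible. This is the minimum cost of a perfect $z$-matching of the graph. Congruence modulo $2$ of vectors is componentwise. *)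

theory Defs
  imports Main "HOL-Library.Extended_Real"
begin

text \<open>Vertices are indexed by 0..<m (rows), edges by 0..<n (columns).\<close>
definition simple_graph_incidence :: "nat \<Rightarrow> nat \<Rightarrow> (nat \<Rightarrow> nat \<Rightarrow> int) \<Rightarrow> bool" where
  "simple_graph_incidence m n M \<longleftrightarrow>
     (\<forall>i<m. \<forall>j<n. M i j = 0 \<or> M i j = 1) \<and>
     (\<forall>j<n. card {i. i < m \<and> M i j = 1} = 2) \<and>
     (\<forall>j<n. \<forall>j'<n. j \<noteq> j' \<longrightarrow> (\<exists>i<m. M i j \<noteq> M i j'))"

text \<open>f_{c,M}(z) = min { c^T x | M x = z, x nonnegative integer }, \<infinity> if infeasible
  (Inf of the empty set of ereals is \<infinity>).\<close>
definition fcM :: "nat \<Rightarrow> nat \<Rightarrow> (nat \<Rightarrow> int) \<Rightarrow> (nat \<Rightarrow> nat \<Rightarrow> int) \<Rightarrow> (nat \<Rightarrow> int) \<Rightarrow> ereal" where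
  "fcM m n c M z = Inf {ereal (of_int (\<Sum>j<n. c j * x j)) | x :: nat \<Rightarrow> int.
      (\<forall>j<n. 0 \<le> x j) \<and> (\<forall>i<m. (\<Sum>j<n. M i j * x j) = z i)}"

end

theory Submission
  imports Defs
begin

(* Choose optimal solutions x_k for the z_k and consider all ways of writing their mean
   sum_k lam_k x_k as a convex combination of nonnegative integer edge vectors whose degrees
   have the parity of z (and are bounded, so that there are finitely many such vectors).  Every
   such combination has average degree vector z and average cost sum_k lam_k c.x_k.  Take one
   minimising the average squared defect sum_u (deg x u - z u)^2.  If a vector of positive
   weight missed z, there would be vectors p, q of positive weight and a vertex v with
   deg p v > z v > deg q v, hence deg p v - deg q v >= 4 by parity.  An alternating walk
   through the edges of p and q starting at v gives A <= p and B <= q whose degree difference is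
   even, equals 2 at v and lies between 0 and deg p - deg q elsewhere.  Exchanging A and B
   between p and q preserves p + q and the parities but strictly decreases the squared defect,
   so moving weight to the exchanged pair contradicts minimality.  Hence all vectors of positive
   weight are perfect z-matchings, and one of them costs at most the average. *)

section \<open>Convex combinations over a finite set\<close>

definition convex_weights :: "'p set \<Rightarrow> ('p \<Rightarrow> 'i \<Rightarrow> real) \<Rightarrow> ('i \<Rightarrow> real) \<Rightarrow> ('p \<Rightarrow> real) \<Rightarrow> bool" where
  "convex_weights F val xb w \<longleftrightarrow> (\<forall>x\<in>F. 0 \<le> w x) \<and> (\<forall>x. x \<notin> F \<longrightarrow> w x = 0) \<and> sum w F = 1 \<and>
     (\<forall>i. (\<Sum>x\<in>F. w x * val x i) = xb i)"

definition affinely_independent :: "'p set \<Rightarrow> ('p \<Rightarrow> 'i \<Rightarrow> real) \<Rightarrow> 'p set \<Rightarrow> bool" where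
  "affinely_independent F val S \<longleftrightarrow> (\<forall>\<mu>. (\<forall>x. x \<notin> S \<longrightarrow> \<mu> x = 0) \<longrightarrow> sum \<mu> F = 0 \<longrightarrow>
      (\<forall>i. (\<Sum>x\<in>F. \<mu> x * val x i) = 0) \<longrightarrow> \<mu> = (\<lambda>_. 0))"

lemma convex_weights_add:
  assumes "convex_weights F val xb w" and "\<forall>x. x \<notin> F \<longrightarrow> \<mu> x = 0" and "sum \<mu> F = 0"
    and "\<forall>i. (\<Sum>x\<in>F. \<mu> x * val x i) = 0" and "\<forall>x\<in>F. 0 \<le> w x + \<mu> x"
  shows "convex_weights F val xb (\<lambda>x. w x + \<mu> x)"
  using assms by (simp add: convex_weights_def sum.distrib distrib_right)

lemma ratio_test:
  fixes w \<mu> :: "'p \<Rightarrow> real"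
  assumes "finite F" and w_nonneg: "\<forall>x\<in>F. 0 \<le> w x" and "x1 \<in> F" "\<mu> x1 < 0"
    and \<mu>_supp: "\<forall>x\<in>F. w x = 0 \<longrightarrow> \<mu> x = 0"
  obtains t x0 where "0 < t" "x0 \<in> F" "w x0 \<noteq> 0" "w x0 + t * \<mu> x0 = 0" "\<forall>x\<in>F. 0 \<le> w x + t * \<mu> x"
proof -
  define N where "N = {x\<in>F. \<mu> x < 0}"
  have "finite N" "N \<noteq> {}" using \<open>finite F\<close> \<open>x1 \<in> F\<close> \<open>\<mu> x1 < 0\<close> by (auto simp: N_def)
  then obtain x0 where x0: "x0 \<in> N" and x0_min: "\<forall>x\<in>N. w x0 / - \<mu> x0 \<le> w x / - \<mu> x"
    using ex_is_arg_min_if_finite[of N "\<lambda>x. w x / - \<mu> x"] by (auto simp: is_arg_min_linorder)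
  define t where "t = w x0 / - \<mu> x0"
  have "w x0 \<noteq> 0" using x0 \<mu>_supp by (auto simp: N_def)
  then have "w x0 > 0" using x0 w_nonneg by (auto simp: N_def order_le_less)
  then have "t > 0" using x0 by (simp add: t_def N_def divide_pos_neg)
  have "0 \<le> w x + t * \<mu> x" if "x \<in> F" for x
  proof (cases "\<mu> x < 0")
    case True
    then have "t \<le> w x / - \<mu> x" using x0_min that by (auto simp: t_def N_def)
    moreover have "0 < - \<mu> x" using True by simp
    ultimately have "t * - \<mu> x \<le> w x" by (subst (asm) pos_le_divide_eq)
    then show ?thesis by simp
  next
    case False
    then show ?thesis using \<open>t > 0\<close> w_nonneg that by simp
  qed
  moreover have "w x0 + t * \<mu> x0 = 0" using x0 by (simp add: t_def N_def)
  ultimately show ?thesis using that \<open>t > 0\<close> x0 \<open>w x0 \<noteq> 0\<close> by (auto simp: N_def)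
qed

lemma convex_weights_shrink_support:
  assumes "finite F" and w: "convex_weights F val xb w"
    and dependent: "\<not> affinely_independent F val {x\<in>F. w x \<noteq> 0}"
  obtains w' where "convex_weights F val xb w'" "{x\<in>F. w' x \<noteq> 0} \<subset> {x\<in>F. w x \<noteq> 0}"
    "(\<Sum>x\<in>F. w' x * \<psi> x) \<le> (\<Sum>x\<in>F. w x * \<psi> x)"
proof -
  define S where "S = {x\<in>F. w x \<noteq> 0}"
  obtain \<mu>0 where \<mu>0: "\<forall>x. x \<notin> S \<longrightarrow> \<mu>0 x = 0" "sum \<mu>0 F = 0"
    "\<forall>i. (\<Sum>x\<in>F. \<mu>0 x * val x i) = 0" "\<mu>0 \<noteq> (\<lambda>_. 0)"
    using dependent unfolding affinely_independent_def S_def by blast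
  \<comment> \<open>Orient the dependency so that moving along it does not increase the objective.\<close>
  define \<mu> where "\<mu> = (if (\<Sum>x\<in>F. \<mu>0 x * \<psi> x) \<le> 0 then \<mu>0 else (\<lambda>x. - \<mu>0 x))"
  have \<mu>S: "\<forall>x. x \<notin> S \<longrightarrow> \<mu> x = 0" and \<mu>sum: "sum \<mu> F = 0"
    and \<mu>val: "\<forall>i. (\<Sum>x\<in>F. \<mu> x * val x i) = 0" and \<mu>\<psi>: "(\<Sum>x\<in>F. \<mu> x * \<psi> x) \<le> 0"
    using \<mu>0 by (auto simp: \<mu>_def sum_negf)
  have "\<exists>x1. x1 \<in> F \<and> \<mu> x1 < 0"
  proof (rule ccontr)
    assume "\<not> ?thesis"
    then have "\<forall>x\<in>F. \<mu> x = 0" using \<mu>sum sum_nonneg_eq_0_iff[OF \<open>finite F\<close>] by (auto simp: not_less)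
    then have "\<mu> = (\<lambda>_. 0)" using \<mu>S by (auto simp: S_def)
    then show False using \<mu>0(4) by (auto simp: \<mu>_def fun_eq_iff split: if_splits)
  qed
  then obtain x1 where "x1 \<in> F" "\<mu> x1 < 0" by blast
  moreover have "\<forall>x\<in>F. 0 \<le> w x" using w by (simp add: convex_weights_def)
  moreover have "\<forall>x\<in>F. w x = 0 \<longrightarrow> \<mu> x = 0" using \<mu>S by (simp add: S_def)
  ultimately obtain t x0 where "0 < t" "x0 \<in> F" "w x0 \<noteq> 0" "w x0 + t * \<mu> x0 = 0"
    and nonneg: "\<forall>x\<in>F. 0 \<le> w x + t * \<mu> x"
    using ratio_test[OF \<open>finite F\<close>, of w x1 \<mu>] by blast
  have "sum (\<lambda>x. t * \<mu> x) F = 0" using \<mu>sum by (simp add: sum_distrib_left[symmetric])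
  moreover have "\<forall>i. (\<Sum>x\<in>F. t * \<mu> x * val x i) = 0"
    using \<mu>val by (simp add: mult.assoc sum_distrib_left[symmetric])
  ultimately have "convex_weights F val xb (\<lambda>x. w x + t * \<mu> x)"
    using w \<mu>S nonneg by (intro convex_weights_add) (auto simp: S_def)
  moreover have "{x\<in>F. w x + t * \<mu> x \<noteq> 0} \<subset> S"
    using \<mu>S \<open>x0 \<in> F\<close> \<open>w x0 \<noteq> 0\<close> \<open>w x0 + t * \<mu> x0 = 0\<close> by (auto simp: S_def)
  moreover have "(\<Sum>x\<in>F. (w x + t * \<mu> x) * \<psi> x) = (\<Sum>x\<in>F. w x * \<psi> x) + t * (\<Sum>x\<in>F. \<mu> x * \<psi> x)"
    by (simp add: distrib_right sum.distrib sum_distrib_left mult.assoc)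
  moreover have "t * (\<Sum>x\<in>F. \<mu> x * \<psi> x) \<le> 0" using \<mu>\<psi> \<open>t > 0\<close> by (simp add: mult_nonneg_nonpos)
  ultimately show ?thesis using that[of "\<lambda>x. w x + t * \<mu> x"] by (simp add: S_def)
qed

lemma convex_weights_reduce:
  assumes "finite F" and "convex_weights F val xb w"
  shows "\<exists>w'. convex_weights F val xb w' \<and> affinely_independent F val {x\<in>F. w' x \<noteq> 0} \<and>
           (\<Sum>x\<in>F. w' x * \<psi> x) \<le> (\<Sum>x\<in>F. w x * \<psi> x)"
  using assms(2)
proof (induction "card {x\<in>F. w x \<noteq> 0}" arbitrary: w rule: less_induct)
  case less
  show ?case
  proof (cases "affinely_independent F val {x\<in>F. w x \<noteq> 0}")
    case True
    then show ?thesis using less.prems by blast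
  next
    case False
    then obtain w' where w': "convex_weights F val xb w'" and "{x\<in>F. w' x \<noteq> 0} \<subset> {x\<in>F. w x \<noteq> 0}"
      and le: "(\<Sum>x\<in>F. w' x * \<psi> x) \<le> (\<Sum>x\<in>F. w x * \<psi> x)"
      using convex_weights_shrink_support[OF \<open>finite F\<close> less.prems] by blast
    then have "card {x\<in>F. w' x \<noteq> 0} < card {x\<in>F. w x \<noteq> 0}"
      using \<open>finite F\<close> by (intro psubset_card_mono) auto
    from less.hyps[OF this w'] le show ?thesis by (meson order_trans)
  qed
qed

lemma convex_weights_minimum:
  assumes "finite F" and "convex_weights F val xb w0"
  shows "\<exists>w. convex_weights F val xb w \<and>
           (\<forall>w'. convex_weights F val xb w' \<longrightarrow> (\<Sum>x\<in>F. w x * \<psi> x) \<le> (\<Sum>x\<in>F. w' x * \<psi> x))"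
proof -
  define B where "B = {w. convex_weights F val xb w \<and> affinely_independent F val {x\<in>F. w x \<noteq> 0}}"
  \<comment> \<open>Weights with affinely independent support are determined by that support.\<close>
  have "inj_on (\<lambda>w. {x\<in>F. w x \<noteq> 0}) B"
  proof (rule inj_onI)
    fix w1 w2 assume "w1 \<in> B" "w2 \<in> B" and supp: "{x\<in>F. w1 x \<noteq> 0} = {x\<in>F. w2 x \<noteq> 0}"
    then have w1: "convex_weights F val xb w1" and w2: "convex_weights F val xb w2"
      and indep: "affinely_independent F val {x\<in>F. w1 x \<noteq> 0}" by (auto simp: B_def)
    have zero_out: "\<forall>x. x \<notin> {x\<in>F. w1 x \<noteq> 0} \<longrightarrow> w1 x - w2 x = 0"
    proof (intro allI impI)
      fix x assume "x \<notin> {x\<in>F. w1 x \<noteq> 0}"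
      then have "x \<notin> F \<or> (w1 x = 0 \<and> w2 x = 0)" using supp by blast
      then show "w1 x - w2 x = 0" using w1 w2 by (auto simp: convex_weights_def)
    qed
    have sum0: "sum (\<lambda>x. w1 x - w2 x) F = 0" and val0: "\<forall>i. (\<Sum>x\<in>F. (w1 x - w2 x) * val x i) = 0"
      using w1 w2 by (simp_all add: convex_weights_def sum_subtractf left_diff_distrib)
    have "(\<lambda>x. w1 x - w2 x) = (\<lambda>_. 0)"
      using indep[unfolded affinely_independent_def, rule_format, OF zero_out[rule_format] sum0 val0[rule_format]] .
    then show "w1 = w2" by (simp add: fun_eq_iff)
  qed
  moreover have "(\<lambda>w. {x\<in>F. w x \<noteq> 0}) ` B \<subseteq> Pow F" by blast
  ultimately have "finite B" using \<open>finite F\<close> inj_on_finite[of _ B "Pow F"] by blast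
  moreover have "B \<noteq> {}" using convex_weights_reduce[OF assms, of \<psi>] by (auto simp: B_def)
  ultimately obtain w where w: "w \<in> B" and w_min: "\<forall>w'\<in>B. (\<Sum>x\<in>F. w x * \<psi> x) \<le> (\<Sum>x\<in>F. w' x * \<psi> x)"
    using ex_is_arg_min_if_finite[of B "\<lambda>w. \<Sum>x\<in>F. w x * \<psi> x"] by (auto simp: is_arg_min_linorder)
  show ?thesis
  proof (intro exI conjI allI impI)
    show "convex_weights F val xb w" using w by (simp add: B_def)
    fix w' assume "convex_weights F val xb w'"
    then obtain w'' where "w'' \<in> B" "(\<Sum>x\<in>F. w'' x * \<psi> x) \<le> (\<Sum>x\<in>F. w' x * \<psi> x)"
      using convex_weights_reduce[OF \<open>finite F\<close>, of val xb w' \<psi>] by (auto simp: B_def)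
    then show "(\<Sum>x\<in>F. w x * \<psi> x) \<le> (\<Sum>x\<in>F. w' x * \<psi> x)" using w_min by (meson order_trans)
  qed
qed

lemma weighted_sum_opposite_sign:
  fixes w g :: "'p \<Rightarrow> real"
  assumes "finite F" "\<forall>x\<in>F. 0 \<le> w x" "(\<Sum>x\<in>F. w x * g x) \<le> 0" "x0 \<in> F" "0 < w x0" "0 < g x0"
  shows "\<exists>y\<in>F. 0 < w y \<and> g y < 0"
proof (rule ccontr)
  assume "\<not> ?thesis"
  then have "\<forall>x\<in>F. 0 \<le> w x * g x" using assms(2) by (metis less_eq_real_def mult_nonneg_nonneg not_le mult_eq_0_iff)
  then have "0 < (\<Sum>x\<in>F. w x * g x)" using assms by (intro sum_pos2[of F x0]) auto
  then show False using assms(3) by simp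
qed

lemma convex_weights_linear:
  assumes "convex_weights F val xb w" "finite J"
  shows "(\<Sum>x\<in>F. w x * (\<Sum>j\<in>J. coef j * val x j)) = (\<Sum>j\<in>J. coef j * xb j)"
proof -
  have "(\<Sum>x\<in>F. w x * (\<Sum>j\<in>J. coef j * val x j)) = (\<Sum>j\<in>J. coef j * (\<Sum>x\<in>F. w x * val x j))"
    by (simp add: sum_distrib_left sum.swap[of _ F] algebra_simps)
  then show ?thesis using assms(1) by (simp add: convex_weights_def)
qed

lemma weighted_average_attained_below:
  fixes w g :: "'p \<Rightarrow> real"
  assumes "finite F" "\<forall>x\<in>F. 0 \<le> w x" "sum w F = 1" "(\<Sum>x\<in>F. w x * g x) \<le> c"
  obtains y where "y \<in> F" "0 < w y" "g y \<le> c"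
proof -
  have "\<exists>x0\<in>F. 0 < w x0"
  proof (rule ccontr)
    assume "\<not> ?thesis"
    then have "sum w F \<le> 0" by (intro sum_nonpos) (auto simp: not_less)
    then show False using assms(3) by simp
  qed
  then obtain x0 where "x0 \<in> F" "0 < w x0" by blast
  have "(\<Sum>x\<in>F. w x * (g x - c)) \<le> 0"
    using assms(3,4) by (simp add: right_diff_distrib sum_subtractf flip: sum_distrib_right)
  then show ?thesis
    using weighted_sum_opposite_sign[of F w "\<lambda>x. g x - c" x0] assms(1,2) \<open>x0 \<in> F\<close> \<open>0 < w x0\<close> that
    by (cases "g x0 \<le> c") auto
qed

lemma weighted_sum_zero_straddle:
  fixes w g :: "'p \<Rightarrow> real"
  assumes "finite F" "\<forall>x\<in>F. 0 \<le> w x" "(\<Sum>x\<in>F. w x * g x) = 0" "x0 \<in> F" "0 < w x0" "g x0 \<noteq> 0"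
  obtains p q where "p \<in> F" "q \<in> F" "0 < w p" "0 < w q" "0 < g p" "g q < 0"
proof (cases "0 < g x0")
  case True
  then show ?thesis
    using weighted_sum_opposite_sign[of F w g x0] assms that by auto
next
  case False
  have "(\<Sum>x\<in>F. w x * - g x) \<le> 0" using assms(3) by (simp add: sum_negf)
  then show ?thesis
    using weighted_sum_opposite_sign[of F w "\<lambda>x. - g x" x0] assms False that by force
qed

lemma convex_weights_of_family:
  assumes "finite K" "finite F" "\<forall>k\<in>K. 0 \<le> lam k" "(\<Sum>k\<in>K. lam k) = 1" "\<forall>k\<in>K. X k \<in> F"
  shows "(\<Sum>x\<in>F. sum lam {k\<in>K. X k = x} * g x) = (\<Sum>k\<in>K. lam k * g (X k))"
    and "convex_weights F val (\<lambda>i. \<Sum>k\<in>K. lam k * val (X k) i) (\<lambda>x. sum lam {k\<in>K. X k = x})"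
proof -
  show sum_eq: "(\<Sum>x\<in>F. sum lam {k\<in>K. X k = x} * g x) = (\<Sum>k\<in>K. lam k * g (X k))" for g
  proof -
    have "(\<Sum>x\<in>F. sum lam {k\<in>K. X k = x} * g x) = (\<Sum>x\<in>F. \<Sum>k\<in>{k\<in>K. X k = x}. lam k * g (X k))"
      unfolding sum_distrib_right by (intro sum.cong) auto
    also have "\<dots> = (\<Sum>k\<in>K. lam k * g (X k))"
      using assms(5) by (intro sum.group[OF assms(1,2)]) auto
    finally show ?thesis .
  qed
  show "convex_weights F val (\<lambda>i. \<Sum>k\<in>K. lam k * val (X k) i) (\<lambda>x. sum lam {k\<in>K. X k = x})"
    unfolding convex_weights_def
  proof (intro conjI ballI allI impI)
    show "0 \<le> sum lam {k\<in>K. X k = x}" for x using assms(3) by (intro sum_nonneg) auto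
    show "sum lam {k\<in>K. X k = x} = 0" if "x \<notin> F" for x using assms(5) that by (intro sum.neutral) auto
    show "(\<Sum>x\<in>F. sum lam {k\<in>K. X k = x}) = 1" using sum_eq[of "\<lambda>_. 1"] assms(4) by simp
    show "(\<Sum>x\<in>F. sum lam {k\<in>K. X k = x} * val x i) = (\<Sum>k\<in>K. lam k * val (X k) i)" for i
      using sum_eq[of "\<lambda>x. val x i"] .
  qed
qed

lemma convex_weights_transfer:
  assumes w: "convex_weights F val xb w" and "finite F"
    and "p' \<in> F" "q' \<in> F" "p \<in> F" "q \<in> F" "p \<noteq> q"
    and val: "\<forall>i. val p' i + val q' i = val p i + val q i"
  obtains w' where "convex_weights F val xb w'"
    "(\<Sum>x\<in>F. w' x * \<psi> x) = (\<Sum>x\<in>F. w x * \<psi> x) + min (w p) (w q) * (\<psi> p' + \<psi> q' - \<psi> p - \<psi> q)"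
proof -
  define t where "t = min (w p) (w q)"
  define \<mu> where "\<mu> x = t * (of_bool (x = p') + of_bool (x = q') - of_bool (x = p) - of_bool (x = q))" for x
  have masses: "(\<Sum>x\<in>F. \<mu> x * g x) = t * (g p' + g q' - g p - g q)" for g
  proof -
    have "(\<Sum>x\<in>F. (of_bool (x = p') + of_bool (x = q') - of_bool (x = p) - of_bool (x = q)) * g x)
        = g p' + g q' - g p - g q"
      using assms(2-6) by (simp add: algebra_simps sum.distrib sum_subtractf)
    then show ?thesis by (simp add: \<mu>_def mult.assoc flip: sum_distrib_left)
  qed
  have "convex_weights F val xb (\<lambda>x. w x + \<mu> x)"
  proof (rule convex_weights_add[OF w])
    show "\<forall>x. x \<notin> F \<longrightarrow> \<mu> x = 0" using assms(3-6) by (auto simp: \<mu>_def)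
    show "sum \<mu> F = 0" using masses[of "\<lambda>_. 1"] by simp
    show "\<forall>i. (\<Sum>x\<in>F. \<mu> x * val x i) = 0" using masses val by simp
    show "\<forall>x\<in>F. 0 \<le> w x + \<mu> x"
    proof
      fix x assume "x \<in> F"
      have "0 \<le> w x" "0 \<le> t" "t \<le> w p" "t \<le> w q"
        using w \<open>x \<in> F\<close> \<open>p \<in> F\<close> \<open>q \<in> F\<close> by (auto simp: t_def convex_weights_def)
      then have "0 \<le> w x - t * (of_bool (x = p) + of_bool (x = q))" "0 \<le> t * (of_bool (x = p') + of_bool (x = q'))"
        using \<open>p \<noteq> q\<close> by auto
      then show "0 \<le> w x + \<mu> x" by (simp add: \<mu>_def algebra_simps)
    qed
  qed
  moreover have "(\<Sum>x\<in>F. (w x + \<mu> x) * \<psi> x) = (\<Sum>x\<in>F. w x * \<psi> x) + t * (\<psi> p' + \<psi> q' - \<psi> p - \<psi> q)"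
    using masses by (simp add: distrib_right sum.distrib)
  ultimately show ?thesis using that t_def by blast
qed

section \<open>Degrees in a simple graph\<close>

definition degree :: "nat \<Rightarrow> (nat \<Rightarrow> nat \<Rightarrow> int) \<Rightarrow> (nat \<Rightarrow> int) \<Rightarrow> nat \<Rightarrow> int" where
  "degree n M x u = (\<Sum>j<n. M u j * x j)"

lemma incidence_01:
  "simple_graph_incidence m n M \<Longrightarrow> u < m \<Longrightarrow> j < n \<Longrightarrow> M u j = 0 \<or> M u j = 1"
  unfolding simple_graph_incidence_def by blast

lemma incidence_has_end:
  assumes "simple_graph_incidence m n M" and "j < n"
  obtains w where "w < m" "M w j = 1"
proof -
  have "card {i. i < m \<and> M i j = 1} = 2"
    using assms unfolding simple_graph_incidence_def by blast
  then have "{i. i < m \<and> M i j = 1} \<noteq> {}" by (metis card.empty zero_neq_numeral)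
  then show ?thesis using that by blast
qed

lemma incidence_other_end:
  assumes G: "simple_graph_incidence m n M" and "j < n" "w < m" "M w j = 1"
  obtains w' where "w' < m" "w' \<noteq> w" "\<forall>u<m. M u j = (if u = w \<or> u = w' then 1 else 0)"
proof -
  have "card {i. i < m \<and> M i j = 1} = 2"
    using G \<open>j < n\<close> unfolding simple_graph_incidence_def by blast
  then obtain x y where xy: "{i. i < m \<and> M i j = 1} = {x, y}" "x \<noteq> y"
    by (auto simp: card_2_iff)
  moreover have "w \<in> {i. i < m \<and> M i j = 1}" using \<open>w < m\<close> \<open>M w j = 1\<close> by simp
  ultimately obtain w' where ends: "{i. i < m \<and> M i j = 1} = {w, w'}" "w' \<noteq> w"
    by (metis insertE insert_commute singletonD)
  then have "w' < m" by blast
  moreover have "M u j = (if u = w \<or> u = w' then 1 else 0)" if "u < m" for u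
  proof -
    have "M u j = 1 \<longleftrightarrow> u = w \<or> u = w'" using ends(1) that by blast
    then show ?thesis using incidence_01[OF G that \<open>j < n\<close>] by auto
  qed
  ultimately show ?thesis using that ends(2) by blast
qed

lemma degree_mono:
  assumes "simple_graph_incidence m n M" "u < m" "\<forall>j<n. x j \<le> y j"
  shows "degree n M x u \<le> degree n M y u"
  unfolding degree_def
proof (rule sum_mono)
  fix j assume "j \<in> {..<n}"
  then show "M u j * x j \<le> M u j * y j" using incidence_01[OF assms(1,2), of j] assms(3) by auto
qed

lemma degree_diff: "degree n M (\<lambda>j. x j - y j) u = degree n M x u - degree n M y u"
  by (simp add: degree_def right_diff_distrib sum_subtractf)

lemma degree_add: "degree n M (\<lambda>j. x j + y j) u = degree n M x u + degree n M y u"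
  by (simp add: degree_def distrib_left sum.distrib)

lemma degree_add_edge:
  assumes "j < n"
  shows "degree n M (x(j := x j + 1)) u = degree n M x u + M u j"
proof -
  have "degree n M (x(j := x j + 1)) u = (\<Sum>i<n. M u i * x i + (if i = j then M u j else 0))"
    unfolding degree_def by (rule sum.cong) (auto simp: algebra_simps)
  then show ?thesis using assms by (simp add: sum.distrib degree_def)
qed

lemma unused_edge:
  assumes G: "simple_graph_incidence m n M" and "u < m" "\<forall>j<n. x j \<le> y j"
    and "degree n M x u < degree n M y u"
  obtains j where "j < n" "M u j = 1" "x j < y j"
proof -
  have "\<exists>j<n. M u j = 1 \<and> x j < y j"
  proof (rule ccontr)
    assume "\<not> ?thesis"
    then have "M u j * x j = M u j * y j" if "j < n" for j
      using incidence_01[OF G \<open>u < m\<close> that] assms(3) that by (auto simp: order_less_le)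
    then have "degree n M x u = degree n M y u" unfolding degree_def by (intro sum.cong) auto
    then show False using assms(4) by simp
  qed
  then show ?thesis using that by blast
qed

lemma entry_le_degree:
  assumes G: "simple_graph_incidence m n M" and "j < n" "w < m" "M w j = 1" "\<forall>i<n. 0 \<le> x i"
  shows "x j \<le> degree n M x w"
proof -
  have "M w j * x j \<le> (\<Sum>i<n. M w i * x i)"
  proof (rule member_le_sum)
    fix i assume "i \<in> {..<n} - {j}"
    then show "0 \<le> M w i * x i" using incidence_01[OF G \<open>w < m\<close>, of i] assms(5) by auto
  qed (use \<open>j < n\<close> in auto)
  then show ?thesis using assms(4) by (simp add: degree_def)
qed

lemma degree_cong: "(\<And>j. j < n \<Longrightarrow> x j = y j) \<Longrightarrow> degree n M x u = degree n M y u"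
  unfolding degree_def by (intro sum.cong) auto

section \<open>Alternating walks\<close>

definition between0 :: "int \<Rightarrow> int \<Rightarrow> bool" where
  "between0 d x \<longleftrightarrow> (0 \<le> x \<and> x \<le> d) \<or> (d \<le> x \<and> x \<le> 0)"

definition open_ends :: "nat \<Rightarrow> nat \<Rightarrow> int \<Rightarrow> nat \<Rightarrow> int" where
  "open_ends v w \<sigma> u = (if u = w then \<sigma> else 0) + (if u = v then 1 else 0)"

(* The walk starts at v with an edge of a, has used the edges A of a and B of b so far and is
   now at w, having arrived along an edge of a (sigma = 1) or of b (sigma = -1).  With
   f = deg A - deg B and d = deg a - deg b, removing the open ends of the walk from f leaves a
   function that is even, vanishes at v and lies between 0 and d elsewhere.  The walk is finished
   when w = v and sigma = 1. *)
definition walk_inv :: "nat \<Rightarrow> (nat \<Rightarrow> int) \<Rightarrow> nat \<Rightarrow> (nat \<Rightarrow> int) \<Rightarrow> nat \<Rightarrow> int \<Rightarrow> bool" where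
  "walk_inv m d v f w \<sigma> \<longleftrightarrow> w < m \<and> (\<sigma> = 1 \<or> \<sigma> = -1) \<and>
     (\<forall>u<m. even (f u - open_ends v w \<sigma> u) \<and>
        (if u = v then f u - open_ends v w \<sigma> u = 0 else between0 (d u) (f u - open_ends v w \<sigma> u)))"

lemma walk_inv_start: "v < m \<Longrightarrow> walk_inv m d v (\<lambda>_. 0) v (-1)"
  by (auto simp: walk_inv_def open_ends_def between0_def)

lemma walk_inv_final:
  assumes "walk_inv m d v f v 1" and "u < m"
  shows "even (f u)" and "u = v \<Longrightarrow> f u = 2" and "u \<noteq> v \<Longrightarrow> between0 (d u) (f u)"
  using assms by (auto simp: walk_inv_def open_ends_def split: if_splits)

lemma walk_inv_step:
  assumes inv: "walk_inv m d v f w \<sigma>" and "w' < m" "w' \<noteq> w" and "s = 1 \<or> s = -1"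
    and turn: "s = - \<sigma> \<or> (s = \<sigma> \<and> w \<noteq> v \<and> between0 (d w) (f w + \<sigma>))"
    and f': "\<forall>u<m. f' u = f u + s * ((if u = w then 1 else 0) + (if u = w' then 1 else 0))"
  shows "walk_inv m d v f' w' s"
proof -
  have shift: "f' u - open_ends v w' s u = f u - open_ends v w \<sigma> u + (if u = w then \<sigma> + s else 0)"
    if "u < m" for u
    using f' that \<open>w' \<noteq> w\<close> by (auto simp: open_ends_def)
  have "even (f' u - open_ends v w' s u) \<and>
    (if u = v then f' u - open_ends v w' s u = 0 else between0 (d u) (f' u - open_ends v w' s u))"
    if u: "u < m" for u
  proof -
    have old: "even (f u - open_ends v w \<sigma> u) \<and>
      (if u = v then f u - open_ends v w \<sigma> u = 0 else between0 (d u) (f u - open_ends v w \<sigma> u))"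
      using inv u unfolding walk_inv_def by blast
    show ?thesis
    proof (cases "s = - \<sigma> \<or> u \<noteq> w")
      case True
      then have "f' u - open_ends v w' s u = f u - open_ends v w \<sigma> u" using shift[OF u] by auto
      then show ?thesis using old by presburger
    next
      case False
      then have "u = w" "w \<noteq> v" "between0 (d w) (f w + \<sigma>)" using turn by auto
      moreover have "f' u - open_ends v w' s u = f w + \<sigma>"
        using shift[OF u] False \<open>u = w\<close> \<open>w \<noteq> v\<close> turn by (auto simp: open_ends_def)
      moreover have "even (f w - \<sigma>)" using old \<open>u = w\<close> \<open>w \<noteq> v\<close> by (simp add: open_ends_def)
      ultimately show ?thesis by simp
    qed
  qed
  then show ?thesis using inv \<open>w' < m\<close> \<open>s = 1 \<or> s = -1\<close> by (simp add: walk_inv_def)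
qed

(* r counts the unused edges of colour sigma at w; by parity it is odd, hence positive. *)
lemma between0_forced_turn:
  fixes d f \<sigma> r :: int
  assumes "between0 d (f - \<sigma>)" "even d" "even (f - \<sigma>)" "\<sigma> = 1 \<or> \<sigma> = -1"
    and "\<sigma> * (d - f) = r" "0 \<le> r"
  shows "0 < r" and "between0 d (f + \<sigma>)"
  using assms unfolding between0_def by presburger+

lemma walk_forced_turn:
  assumes G: "simple_graph_incidence m n M"
    and bounds: "\<forall>j<n. 0 \<le> A j \<and> A j \<le> a j \<and> 0 \<le> B j \<and> B j \<le> b j"
    and d: "\<forall>u<m. d u = degree n M a u - degree n M b u" and d_even: "\<forall>u<m. even (d u)"
    and inv: "walk_inv m d v (\<lambda>u. degree n M A u - degree n M B u) w \<sigma>" and "w \<noteq> v"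
    and saturated: "if \<sigma> = 1 then degree n M B w = degree n M b w else degree n M A w = degree n M a w"
  shows "between0 (d w) (degree n M A w - degree n M B w + \<sigma>)"
    and "if \<sigma> = 1 then degree n M A w < degree n M a w else degree n M B w < degree n M b w"
proof -
  define f where "f = degree n M A w - degree n M B w"
  define r where "r = (if \<sigma> = 1 then degree n M a w - degree n M A w else degree n M b w - degree n M B w)"
  have "w < m" and \<sigma>: "\<sigma> = 1 \<or> \<sigma> = -1" using inv by (auto simp: walk_inv_def)
  then have "even (f - \<sigma>)" "between0 (d w) (f - \<sigma>)"
    using inv \<open>w \<noteq> v\<close> unfolding walk_inv_def f_def by (auto simp: open_ends_def)
  moreover have "0 \<le> r" using degree_mono[OF G \<open>w < m\<close>] bounds by (auto simp: r_def)
  moreover have "\<sigma> * (d w - f) = r" using \<sigma> saturated d \<open>w < m\<close> by (auto simp: r_def f_def)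
  ultimately have "0 < r" "between0 (d w) (f + \<sigma>)"
    using between0_forced_turn[of "d w" f \<sigma> r] d_even \<open>w < m\<close> \<sigma> by auto
  then show "between0 (d w) (degree n M A w - degree n M B w + \<sigma>)"
    and "if \<sigma> = 1 then degree n M A w < degree n M a w else degree n M B w < degree n M b w"
    by (auto simp: f_def r_def)
qed

lemma walk_continues:
  assumes G: "simple_graph_incidence m n M"
    and bounds: "\<forall>j<n. 0 \<le> A j \<and> A j \<le> a j \<and> 0 \<le> B j \<and> B j \<le> b j"
    and d: "\<forall>u<m. d u = degree n M a u - degree n M b u" and d_even: "\<forall>u<m. even (d u)" and "2 \<le> d v"
    and inv: "walk_inv m d v (\<lambda>u. degree n M A u - degree n M B u) w \<sigma>" and not_final: "\<not> (w = v \<and> \<sigma> = 1)"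
  obtains s j where "s = - \<sigma> \<or> (s = \<sigma> \<and> w \<noteq> v \<and> between0 (d w) (degree n M A w - degree n M B w + \<sigma>))"
    and "j < n" "M w j = 1" "if s = 1 then A j < a j else B j < b j"
proof -
  have "w < m" and \<sigma>: "\<sigma> = 1 \<or> \<sigma> = -1" using inv by (auto simp: walk_inv_def)
  have A_le: "\<forall>j<n. A j \<le> a j" and B_le: "\<forall>j<n. B j \<le> b j" using bounds by auto
  note mono = degree_mono[OF G \<open>w < m\<close>]
  show ?thesis
  proof (cases "if \<sigma> = 1 then degree n M B w < degree n M b w else degree n M A w < degree n M a w")
    case True
    then show ?thesis
      using \<sigma> unused_edge[OF G \<open>w < m\<close> A_le] unused_edge[OF G \<open>w < m\<close> B_le] that[of "- \<sigma>"]
      by (auto split: if_splits)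
  next
    case False
    then have saturated: "if \<sigma> = 1 then degree n M B w = degree n M b w else degree n M A w = degree n M a w"
      using mono[OF A_le] mono[OF B_le] by (auto split: if_splits)
    have "w \<noteq> v"
    proof
      assume "w = v"
      then have "\<sigma> = -1" using not_final \<sigma> by blast
      then have "degree n M A v - degree n M B v = 0"
        using inv \<open>w = v\<close> \<open>w < m\<close> unfolding walk_inv_def by (auto simp: open_ends_def)
      then show False
        using saturated \<open>\<sigma> = -1\<close> \<open>w = v\<close> d mono[OF B_le] \<open>2 \<le> d v\<close> \<open>w < m\<close> by auto
    qed
    from walk_forced_turn[OF G bounds d d_even inv \<open>w \<noteq> v\<close> saturated] show ?thesis
      using \<sigma> \<open>w \<noteq> v\<close> unused_edge[OF G \<open>w < m\<close> A_le] unused_edge[OF G \<open>w < m\<close> B_le] that[of \<sigma>]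
      by (auto split: if_splits)
  qed
qed

lemma walk_extend:
  assumes G: "simple_graph_incidence m n M"
    and bounds: "\<forall>j<n. 0 \<le> A j \<and> A j \<le> a j \<and> 0 \<le> B j \<and> B j \<le> b j"
    and inv: "walk_inv m d v (\<lambda>u. degree n M A u - degree n M B u) w \<sigma>"
    and turn: "s = - \<sigma> \<or> (s = \<sigma> \<and> w \<noteq> v \<and> between0 (d w) (degree n M A w - degree n M B w + \<sigma>))"
    and "j < n" "M w j = 1" and unused: "if s = 1 then A j < a j else B j < b j"
  obtains A' B' w' where "\<forall>i<n. 0 \<le> A' i \<and> A' i \<le> a i \<and> 0 \<le> B' i \<and> B' i \<le> b i"
    "walk_inv m d v (\<lambda>u. degree n M A' u - degree n M B' u) w' s"
    "(\<Sum>i<n. (a i - A' i) + (b i - B' i)) = (\<Sum>i<n. (a i - A i) + (b i - B i)) - 1"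
proof -
  have "w < m" and "\<sigma> = 1 \<or> \<sigma> = -1" using inv by (auto simp: walk_inv_def)
  then have s: "s = 1 \<or> s = -1" using turn by auto
  obtain w' where w': "w' < m" "w' \<noteq> w" and col: "\<forall>u<m. M u j = (if u = w \<or> u = w' then 1 else 0)"
    using incidence_other_end[OF G \<open>j < n\<close> \<open>w < m\<close> \<open>M w j = 1\<close>] by blast
  define A' where "A' = (if s = 1 then A(j := A j + 1) else A)"
  define B' where "B' = (if s = 1 then B else B(j := B j + 1))"
  have "\<forall>i<n. 0 \<le> A' i \<and> A' i \<le> a i \<and> 0 \<le> B' i \<and> B' i \<le> b i"
    using bounds unused by (cases "s = 1") (auto simp: A'_def B'_def)
  moreover have "\<forall>u<m. degree n M A' u - degree n M B' u =
      degree n M A u - degree n M B u + s * ((if u = w then 1 else 0) + (if u = w' then 1 else 0))"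
  proof (intro allI impI)
    fix u assume "u < m"
    then have "M u j = (if u = w then 1 else 0) + (if u = w' then 1 else 0)" using col \<open>w' \<noteq> w\<close> by auto
    then show "degree n M A' u - degree n M B' u =
      degree n M A u - degree n M B u + s * ((if u = w then 1 else 0) + (if u = w' then 1 else 0))"
      using s by (cases "s = 1") (simp_all add: A'_def B'_def degree_add_edge[OF \<open>j < n\<close>])
  qed
  note walk_inv_step[OF inv w' s turn this]
  moreover have "(\<Sum>i<n. (a i - A' i) + (b i - B' i)) = (\<Sum>i<n. (a i - A i) + (b i - B i)) - 1"
  proof -
    have "(\<Sum>i<n. (a i - A' i) + (b i - B' i)) = (\<Sum>i<n. (a i - A i) + (b i - B i) - (if i = j then 1 else 0))"
      by (cases "s = 1") (auto simp: A'_def B'_def intro: sum.cong)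
    then show ?thesis using \<open>j < n\<close> by (simp add: sum_subtractf)
  qed
  ultimately show ?thesis using that by blast
qed

lemma alternating_walk:
  assumes G: "simple_graph_incidence m n M"
    and d: "\<forall>u<m. d u = degree n M a u - degree n M b u" and d_even: "\<forall>u<m. even (d u)" and "2 \<le> d v"
  shows "\<forall>j<n. 0 \<le> A j \<and> A j \<le> a j \<and> 0 \<le> B j \<and> B j \<le> b j \<Longrightarrow>
    walk_inv m d v (\<lambda>u. degree n M A u - degree n M B u) w \<sigma> \<Longrightarrow>
    \<exists>A' B'. (\<forall>j<n. 0 \<le> A' j \<and> A' j \<le> a j \<and> 0 \<le> B' j \<and> B' j \<le> b j) \<and>
      walk_inv m d v (\<lambda>u. degree n M A' u - degree n M B' u) v 1"
proof (induction "nat (\<Sum>j<n. (a j - A j) + (b j - B j))" arbitrary: A B w \<sigma> rule: less_induct)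
  case less
  show ?case
  proof (cases "w = v \<and> \<sigma> = 1")
    case True
    then show ?thesis using less.prems by blast
  next
    case False
    obtain s j where "s = - \<sigma> \<or> (s = \<sigma> \<and> w \<noteq> v \<and> between0 (d w) (degree n M A w - degree n M B w + \<sigma>))"
      and "j < n" "M w j = 1" "if s = 1 then A j < a j else B j < b j"
      using walk_continues[OF G less.prems(1) d d_even \<open>2 \<le> d v\<close> less.prems(2) False] by blast
    from walk_extend[OF G less.prems this]
    obtain A' B' w' where bounds': "\<forall>i<n. 0 \<le> A' i \<and> A' i \<le> a i \<and> 0 \<le> B' i \<and> B' i \<le> b i"
      and inv': "walk_inv m d v (\<lambda>u. degree n M A' u - degree n M B' u) w' s"
      and slack: "(\<Sum>i<n. (a i - A' i) + (b i - B' i)) = (\<Sum>i<n. (a i - A i) + (b i - B i)) - 1" .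
    have "0 \<le> (\<Sum>i<n. (a i - A' i) + (b i - B' i))" using bounds' by (intro sum_nonneg) auto
    then have "nat (\<Sum>i<n. (a i - A' i) + (b i - B' i)) < nat (\<Sum>i<n. (a i - A i) + (b i - B i))"
      using slack by linarith
    from less.hyps[OF this bounds' inv'] show ?thesis .
  qed
qed

lemma alternating_walk_exists:
  assumes G: "simple_graph_incidence m n M" and "v < m"
    and even: "\<forall>u<m. even (degree n M a u - degree n M b u)" and "2 \<le> degree n M a v - degree n M b v"
    and nonneg: "\<forall>j<n. 0 \<le> a j \<and> 0 \<le> b j"
  obtains A B where "\<forall>j<n. 0 \<le> A j \<and> A j \<le> a j \<and> 0 \<le> B j \<and> B j \<le> b j"
    and "\<forall>u<m. even (degree n M A u - degree n M B u)"
    and "degree n M A v - degree n M B v = 2"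
    and "\<forall>u<m. u \<noteq> v \<longrightarrow> between0 (degree n M a u - degree n M b u) (degree n M A u - degree n M B u)"
proof -
  define d where "d u = degree n M a u - degree n M b u" for u
  have d: "\<forall>u<m. d u = degree n M a u - degree n M b u" and d_even: "\<forall>u<m. even (d u)"
    and "2 \<le> d v" using even \<open>2 \<le> _\<close> by (simp_all add: d_def)
  have "walk_inv m d v (\<lambda>u. degree n M (\<lambda>_. 0) u - degree n M (\<lambda>_. 0) u) v (-1)"
    using walk_inv_start[OF \<open>v < m\<close>] by (simp add: degree_def)
  moreover have "\<forall>j<n. 0 \<le> (0::int) \<and> 0 \<le> a j \<and> 0 \<le> (0::int) \<and> 0 \<le> b j" using nonneg by simp
  ultimately obtain A B where "\<forall>j<n. 0 \<le> A j \<and> A j \<le> a j \<and> 0 \<le> B j \<and> B j \<le> b j"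
    and final: "walk_inv m d v (\<lambda>u. degree n M A u - degree n M B u) v 1"
    using alternating_walk[OF G d d_even \<open>2 \<le> d v\<close>, where A = "\<lambda>_. 0" and B = "\<lambda>_. 0"]
    by blast
  moreover note walk_inv_final[OF final]
  ultimately show ?thesis using that \<open>v < m\<close> by (simp add: d_def)
qed

section \<open>Exchanging edges between parity-constrained edge vectors\<close>

definition admissible :: "nat \<Rightarrow> nat \<Rightarrow> (nat \<Rightarrow> nat \<Rightarrow> int) \<Rightarrow> (nat \<Rightarrow> int) \<Rightarrow> (nat \<Rightarrow> int) \<Rightarrow> (nat \<Rightarrow> int) \<Rightarrow> bool" where
  "admissible m n M z bound x \<longleftrightarrow> (\<forall>j<n. 0 \<le> x j) \<and> (\<forall>j\<ge>n. x j = 0) \<and>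
     (\<forall>u<m. degree n M x u \<le> bound u) \<and> (\<forall>u<m. degree n M x u mod 2 = z u mod 2)"

definition defect :: "nat \<Rightarrow> nat \<Rightarrow> (nat \<Rightarrow> nat \<Rightarrow> int) \<Rightarrow> (nat \<Rightarrow> int) \<Rightarrow> (nat \<Rightarrow> int) \<Rightarrow> int" where
  "defect m n M z x = (\<Sum>u<m. (degree n M x u - z u)\<^sup>2)"

lemma finite_admissible:
  assumes G: "simple_graph_incidence m n M"
  shows "finite {x. admissible m n M z bound x}"
proof -
  define Bd where "Bd = (\<Sum>u<m. \<bar>bound u\<bar>)"
  have "x j \<in> {0..Bd}" if x: "admissible m n M z bound x" and "j < n" for x j
  proof -
    obtain w where "w < m" "M w j = 1" using incidence_has_end[OF G \<open>j < n\<close>] by blast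
    have "x j \<le> degree n M x w"
      using entry_le_degree[OF G \<open>j < n\<close> \<open>w < m\<close> \<open>M w j = 1\<close>] x by (simp add: admissible_def)
    also have "\<dots> \<le> \<bar>bound w\<bar>" using x \<open>w < m\<close> by (auto simp: admissible_def)
    also have "\<dots> \<le> Bd" unfolding Bd_def using \<open>w < m\<close> by (intro member_le_sum) auto
    finally show ?thesis using x \<open>j < n\<close> by (simp add: admissible_def)
  qed
  then have "{x. admissible m n M z bound x} \<subseteq>
      {x. \<forall>j. (j \<in> {..<n} \<longrightarrow> x j \<in> {0..Bd}) \<and> (j \<notin> {..<n} \<longrightarrow> x j = 0)}"
    by (auto simp: admissible_def)
  then show ?thesis by (rule finite_subset) (intro finite_set_of_finite_funs; simp)
qed

definition swap_edges :: "nat \<Rightarrow> (nat \<Rightarrow> int) \<Rightarrow> (nat \<Rightarrow> int) \<Rightarrow> (nat \<Rightarrow> int) \<Rightarrow> nat \<Rightarrow> int" where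
  "swap_edges n x A B j = (if j < n then x j - A j + B j else 0)"

lemma degree_swap_edges:
  "degree n M (swap_edges n x A B) u = degree n M x u - (degree n M A u - degree n M B u)"
proof -
  have "degree n M (swap_edges n x A B) u = degree n M (\<lambda>j. x j - A j + B j) u"
    by (rule degree_cong) (simp add: swap_edges_def)
  then show ?thesis by (simp add: degree_add degree_diff)
qed

lemma admissible_swap_edges:
  assumes "admissible m n M z bound x" and "\<forall>j<n. A j \<le> x j \<and> 0 \<le> B j"
    and "\<forall>u<m. even (degree n M A u - degree n M B u)"
    and "\<forall>u<m. degree n M x u - (degree n M A u - degree n M B u) \<le> bound u"
  shows "admissible m n M z bound (swap_edges n x A B)"
  unfolding admissible_def degree_swap_edges
proof (intro conjI allI impI)
  fix u assume "u < m"
  then have "even (degree n M A u - degree n M B u)" "degree n M x u mod 2 = z u mod 2"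
    using assms(1,3) by (auto simp: admissible_def)
  then show "(degree n M x u - (degree n M A u - degree n M B u)) mod 2 = z u mod 2" by presburger
qed (use assms in \<open>auto simp: admissible_def swap_edges_def\<close>)

lemma sum_squares_exchange_le:
  fixes p q f z :: int
  assumes "between0 (p - q) f"
  shows "(p - f - z)\<^sup>2 + (q + f - z)\<^sup>2 \<le> (p - z)\<^sup>2 + (q - z)\<^sup>2"
proof -
  have "(p - f - z)\<^sup>2 + (q + f - z)\<^sup>2 = (p - z)\<^sup>2 + (q - z)\<^sup>2 - 2 * (f * (p - q - f))"
    by (simp add: power2_eq_square algebra_simps)
  moreover have "0 \<le> f * (p - q - f)"
    using assms unfolding between0_def by (auto intro: mult_nonpos_nonpos)
  ultimately show ?thesis by simp
qed

lemma sum_squares_exchange_less: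
  fixes p q z :: int
  assumes "4 \<le> p - q"
  shows "(p - 2 - z)\<^sup>2 + (q + 2 - z)\<^sup>2 < (p - z)\<^sup>2 + (q - z)\<^sup>2"
proof -
  have "(p - 2 - z)\<^sup>2 + (q + 2 - z)\<^sup>2 = (p - z)\<^sup>2 + (q - z)\<^sup>2 - 4 * (p - q - 2)"
    by (simp add: power2_eq_square algebra_simps)
  then show ?thesis using assms by simp
qed

lemma sum_squares_exchange:
  fixes p q f z :: "nat \<Rightarrow> int"
  assumes "v < m" "4 \<le> p v - q v" "f v = 2" "\<forall>u<m. u \<noteq> v \<longrightarrow> between0 (p u - q u) (f u)"
  shows "(\<Sum>u<m. (p u - f u - z u)\<^sup>2) + (\<Sum>u<m. (q u + f u - z u)\<^sup>2) < (\<Sum>u<m. (p u - z u)\<^sup>2) + (\<Sum>u<m. (q u - z u)\<^sup>2)"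
proof -
  have "(\<Sum>u<m. (p u - f u - z u)\<^sup>2 + (q u + f u - z u)\<^sup>2) < (\<Sum>u<m. (p u - z u)\<^sup>2 + (q u - z u)\<^sup>2)"
  proof (rule sum_strict_mono_ex1)
    show "\<forall>u\<in>{..<m}. (p u - f u - z u)\<^sup>2 + (q u + f u - z u)\<^sup>2 \<le> (p u - z u)\<^sup>2 + (q u - z u)\<^sup>2"
    proof
      fix u assume "u \<in> {..<m}"
      then show "(p u - f u - z u)\<^sup>2 + (q u + f u - z u)\<^sup>2 \<le> (p u - z u)\<^sup>2 + (q u - z u)\<^sup>2"
        using sum_squares_exchange_le[of "p u" "q u" "f u" "z u"] sum_squares_exchange_less[OF assms(2), of "z v"]
          assms(3,4) by (cases "u = v") auto
    qed
    show "\<exists>u\<in>{..<m}. (p u - f u - z u)\<^sup>2 + (q u + f u - z u)\<^sup>2 < (p u - z u)\<^sup>2 + (q u - z u)\<^sup>2"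
      using sum_squares_exchange_less[OF assms(2)] assms(1,3) by (intro bexI[of _ v]) auto
  qed simp
  then show ?thesis by (simp add: sum.distrib)
qed

lemma admissible_degree_gap:
  assumes "admissible m n M z bound p" "admissible m n M z bound q"
    and "v < m" "z v < degree n M p v" "degree n M q v < z v"
  shows "\<forall>u<m. even (degree n M p u - degree n M q u)" and "4 \<le> degree n M p v - degree n M q v"
proof -
  have par: "degree n M p u mod 2 = z u mod 2" "degree n M q u mod 2 = z u mod 2" if "u < m" for u
    using assms(1,2) that by (simp_all add: admissible_def)
  show "\<forall>u<m. even (degree n M p u - degree n M q u)"
  proof (intro allI impI)
    fix u assume "u < m"
    from par[OF this] show "even (degree n M p u - degree n M q u)" by presburger
  qed
  \<comment> \<open>The degrees at v differ from z v by at least 2 on each side.\<close>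
  show "4 \<le> degree n M p v - degree n M q v" using par[OF \<open>v < m\<close>] assms(4,5) by presburger
qed

lemma admissible_exchange:
  assumes G: "simple_graph_incidence m n M"
    and p: "admissible m n M z bound p" and q: "admissible m n M z bound q"
    and "v < m" and above: "z v < degree n M p v" and below: "degree n M q v < z v"
  obtains p' q' where "admissible m n M z bound p'" "admissible m n M z bound q'"
    and "\<forall>j. p' j + q' j = p j + q j"
    and "defect m n M z p' + defect m n M z q' < defect m n M z p + defect m n M z q"
proof -
  define e where "e u = degree n M p u - degree n M q u" for u
  have "\<forall>u<m. even (e u)" and "4 \<le> e v"
    using admissible_degree_gap[OF p q \<open>v < m\<close> above below] by (simp_all add: e_def)
  then obtain A B where AB: "\<forall>j<n. 0 \<le> A j \<and> A j \<le> p j \<and> 0 \<le> B j \<and> B j \<le> q j"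
    and f_even: "\<forall>u<m. even (degree n M A u - degree n M B u)"
    and f_v: "degree n M A v - degree n M B v = 2"
    and f_between: "\<forall>u<m. u \<noteq> v \<longrightarrow> between0 (e u) (degree n M A u - degree n M B u)"
    using alternating_walk_exists[OF G \<open>v < m\<close>, of p q] p q unfolding e_def admissible_def by auto
  define f where "f u = degree n M A u - degree n M B u" for u
  have bounded: "degree n M p u - f u \<le> bound u \<and> degree n M q u + f u \<le> bound u" if "u < m" for u
  proof -
    have "degree n M p u \<le> bound u" "degree n M q u \<le> bound u" using p q that by (auto simp: admissible_def)
    then show ?thesis
      using f_v f_between that \<open>4 \<le> e v\<close> by (cases "u = v") (auto simp: f_def e_def between0_def)
  qed
  have "admissible m n M z bound (swap_edges n p A B)"
    using p AB f_even bounded by (intro admissible_swap_edges) (auto simp: f_def)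
  moreover have "admissible m n M z bound (swap_edges n q B A)"
  proof (rule admissible_swap_edges[OF q])
    show "\<forall>u<m. even (degree n M B u - degree n M A u)" using f_even by simp
    show "\<forall>u<m. degree n M q u - (degree n M B u - degree n M A u) \<le> bound u"
      using bounded unfolding f_def by force
  qed (use AB in auto)
  moreover have "\<forall>j. swap_edges n p A B j + swap_edges n q B A j = p j + q j"
    using p q by (auto simp: swap_edges_def admissible_def)
  moreover have "defect m n M z (swap_edges n p A B) + defect m n M z (swap_edges n q B A)
      < defect m n M z p + defect m n M z q"
  proof -
    have "degree n M (swap_edges n p A B) u = degree n M p u - f u"
      and "degree n M (swap_edges n q B A) u = degree n M q u + f u" for u
      by (simp_all add: degree_swap_edges f_def)
    then show ?thesis
      using sum_squares_exchange[of v m "degree n M p" "degree n M q" f z] \<open>v < m\<close> \<open>4 \<le> e v\<close> f_v f_between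
      by (simp add: defect_def f_def e_def)
  qed
  ultimately show ?thesis using that by blast
qed

section \<open>Minimum-cost perfect z-matchings\<close>

lemma defect_minimal_weights_exact:
  assumes G: "simple_graph_incidence m n M"
    and F: "F = {x. admissible m n M z bound x}"
    and ws: "convex_weights F (\<lambda>x j. real_of_int (x j)) xb ws"
    and deg_avg: "\<forall>u<m. (\<Sum>x\<in>F. ws x * real_of_int (degree n M x u)) = real_of_int (z u)"
    and min: "\<forall>w. convex_weights F (\<lambda>x j. real_of_int (x j)) xb w \<longrightarrow>
      (\<Sum>x\<in>F. ws x * real_of_int (defect m n M z x)) \<le> (\<Sum>x\<in>F. w x * real_of_int (defect m n M z x))"
    and "x0 \<in> F" "0 < ws x0" "u < m"
  shows "degree n M x0 u = z u"
proof (rule ccontr)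
  assume "degree n M x0 u \<noteq> z u"
  have "finite F" using finite_admissible[OF G] F by simp
  have "\<forall>x\<in>F. 0 \<le> ws x" "sum ws F = 1" using ws by (auto simp: convex_weights_def)
  then have "(\<Sum>x\<in>F. ws x * (real_of_int (degree n M x u) - real_of_int (z u))) = 0"
    using deg_avg \<open>u < m\<close> by (simp add: right_diff_distrib sum_subtractf sum_distrib_right[symmetric])
  then obtain p q where pq: "p \<in> F" "q \<in> F" "0 < ws p" "0 < ws q"
    and "0 < real_of_int (degree n M p u) - real_of_int (z u)" "real_of_int (degree n M q u) - real_of_int (z u) < 0"
    by (rule weighted_sum_zero_straddle[OF \<open>finite F\<close> \<open>\<forall>x\<in>F. 0 \<le> ws x\<close>])
      (use \<open>x0 \<in> F\<close> \<open>0 < ws x0\<close> \<open>degree n M x0 u \<noteq> z u\<close> in auto)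
  then have "z u < degree n M p u" "degree n M q u < z u" by simp_all
  moreover have "admissible m n M z bound p" "admissible m n M z bound q" using pq F by auto
  ultimately obtain p' q' where "admissible m n M z bound p'" "admissible m n M z bound q'"
    and sum_eq: "\<forall>j. p' j + q' j = p j + q j"
    and less: "defect m n M z p' + defect m n M z q' < defect m n M z p + defect m n M z q"
    using admissible_exchange[OF G _ _ \<open>u < m\<close>] by blast
  then have "p' \<in> F" "q' \<in> F" using F by auto
  have "\<forall>j. real_of_int (p' j) + real_of_int (q' j) = real_of_int (p j) + real_of_int (q j)"
    using sum_eq by (metis of_int_add)
  moreover have "p \<noteq> q" using \<open>z u < degree n M p u\<close> \<open>degree n M q u < z u\<close> by auto
  ultimately obtain w' where "convex_weights F (\<lambda>x j. real_of_int (x j)) xb w'"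
    and "(\<Sum>x\<in>F. w' x * real_of_int (defect m n M z x)) = (\<Sum>x\<in>F. ws x * real_of_int (defect m n M z x))
      + min (ws p) (ws q) * real_of_int (defect m n M z p' + defect m n M z q' - defect m n M z p - defect m n M z q)"
    using convex_weights_transfer[OF ws \<open>finite F\<close> \<open>p' \<in> F\<close> \<open>q' \<in> F\<close> pq(1,2),
        where \<psi> = "\<lambda>x. real_of_int (defect m n M z x)"] by auto
  moreover have "min (ws p) (ws q) * real_of_int (defect m n M z p' + defect m n M z q' - defect m n M z p - defect m n M z q) < 0"
    using less pq by (simp add: mult_pos_neg)
  ultimately show False using min by force
qed

lemma admissible_family:
  assumes "finite K"
    and "\<forall>k\<in>K. (\<forall>j<n. 0 \<le> X k j) \<and> (\<forall>j\<ge>n. X k j = 0) \<and> (\<forall>u<m. degree n M (X k) u mod 2 = z u mod 2)"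
    and "k \<in> K"
  shows "admissible m n M z (\<lambda>u. \<Sum>k\<in>K. \<bar>degree n M (X k) u\<bar>) (X k)"
proof -
  have "\<bar>degree n M (X k) u\<bar> \<le> (\<Sum>k\<in>K. \<bar>degree n M (X k) u\<bar>)" for u
    using assms(1,3) by (intro member_le_sum) auto
  then have "degree n M (X k) u \<le> (\<Sum>k\<in>K. \<bar>degree n M (X k) u\<bar>)" for u by (rule order_trans[OF abs_ge_self])
  then show ?thesis using assms(2,3) unfolding admissible_def by blast
qed

lemma exact_vector_below_average_cost:
  assumes G: "simple_graph_incidence m n M" and "finite K"
    and lam_nonneg: "\<forall>k\<in>K. 0 \<le> lam k" and lam_sum: "(\<Sum>k\<in>K. lam k) = 1"
    and X: "\<forall>k\<in>K. (\<forall>j<n. 0 \<le> X k j) \<and> (\<forall>j\<ge>n. X k j = 0) \<and> (\<forall>u<m. degree n M (X k) u mod 2 = z u mod 2)"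
    and z_avg: "\<forall>u<m. real_of_int (z u) = (\<Sum>k\<in>K. lam k * real_of_int (degree n M (X k) u))"
  obtains y where "\<forall>j<n. 0 \<le> y j" "\<forall>u<m. degree n M y u = z u"
    "real_of_int (\<Sum>j<n. c j * y j) \<le> (\<Sum>k\<in>K. lam k * real_of_int (\<Sum>j<n. c j * X k j))"
proof -
  define bound where "bound = (\<lambda>u. \<Sum>k\<in>K. \<bar>degree n M (X k) u\<bar>)"
  define F where "F = {x. admissible m n M z bound x}"
  define val :: "(nat \<Rightarrow> int) \<Rightarrow> nat \<Rightarrow> real" where "val = (\<lambda>x j. real_of_int (x j))"
  define xb where "xb j = (\<Sum>k\<in>K. lam k * val (X k) j)" for j
  have "finite F" by (simp add: F_def finite_admissible[OF G])
  have "X k \<in> F" if "k \<in> K" for k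
    using admissible_family[OF \<open>finite K\<close> X that] by (simp add: F_def bound_def)
  note family = convex_weights_of_family[OF \<open>finite K\<close> \<open>finite F\<close> lam_nonneg lam_sum, of X]
  have w0: "convex_weights F val xb (\<lambda>x. sum lam {k\<in>K. X k = x})"
    using family(2) \<open>\<And>k. k \<in> K \<Longrightarrow> X k \<in> F\<close> by (simp add: xb_def[abs_def])
  have avg: "(\<Sum>x\<in>F. w x * real_of_int (\<Sum>j<n. coef j * x j)) = (\<Sum>k\<in>K. lam k * real_of_int (\<Sum>j<n. coef j * X k j))"
    if "convex_weights F val xb w" for w coef
    using convex_weights_linear[OF that, of "{..<n}" "\<lambda>j. real_of_int (coef j)"]
      convex_weights_linear[OF w0, of "{..<n}" "\<lambda>j. real_of_int (coef j)"]
      family(1) \<open>\<And>k. k \<in> K \<Longrightarrow> X k \<in> F\<close> by (simp add: val_def)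
  obtain ws where ws: "convex_weights F val xb ws" and ws_min: "\<forall>w. convex_weights F val xb w \<longrightarrow>
      (\<Sum>x\<in>F. ws x * real_of_int (defect m n M z x)) \<le> (\<Sum>x\<in>F. w x * real_of_int (defect m n M z x))"
    using convex_weights_minimum[OF \<open>finite F\<close> w0, where \<psi> = "\<lambda>x. real_of_int (defect m n M z x)"]
    by blast
  have "\<forall>u<m. (\<Sum>x\<in>F. ws x * real_of_int (degree n M x u)) = real_of_int (z u)"
    using avg[OF ws] z_avg by (simp add: degree_def)
  from defect_minimal_weights_exact[OF G F_def ws[unfolded val_def] this ws_min[unfolded val_def]]
  have exact: "degree n M x u = z u" if "x \<in> F" "0 < ws x" "u < m" for x u
    using that by blast
  define C where "C = (\<Sum>k\<in>K. lam k * real_of_int (\<Sum>j<n. c j * X k j))"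
  have "\<forall>x\<in>F. 0 \<le> ws x" "sum ws F = 1" using ws by (auto simp: convex_weights_def)
  moreover have "(\<Sum>x\<in>F. ws x * real_of_int (\<Sum>j<n. c j * x j)) \<le> C" using avg[OF ws, of c] by (simp add: C_def)
  ultimately obtain y where "y \<in> F" "0 < ws y" "real_of_int (\<Sum>j<n. c j * y j) \<le> C"
    by (rule weighted_average_attained_below[OF \<open>finite F\<close>, where g = "\<lambda>y. real_of_int (\<Sum>j<n. c j * y j)"])
  moreover from this have "\<forall>j<n. 0 \<le> y j" by (simp add: F_def admissible_def)
  ultimately show ?thesis using that exact unfolding C_def by blast
qed

lemma fcM_le:
  assumes "\<forall>j<n. 0 \<le> y j" "\<forall>i<m. degree n M y i = z i"
  shows "fcM m n c M z \<le> ereal (of_int (\<Sum>j<n. c j * y j))"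
  unfolding fcM_def using assms by (intro Inf_lower) (auto simp: degree_def)

lemma fcM_attained:
  assumes G: "simple_graph_incidence m n M" and "fcM m n c M z \<noteq> \<infinity>"
  shows "\<exists>x. (\<forall>j<n. 0 \<le> x j) \<and> (\<forall>j\<ge>n. x j = 0) \<and> (\<forall>i<m. degree n M x i = z i) \<and>
    fcM m n c M z = ereal (of_int (\<Sum>j<n. c j * x j))"
proof -
  define T where "T = {x. (\<forall>j<n. 0 \<le> x j) \<and> (\<forall>j\<ge>n. x j = 0) \<and> (\<forall>i<m. degree n M x i = z i)}"
  define cost where "cost x = ereal (of_int (\<Sum>j<n. c j * x j))" for x
  have "fcM m n c M z = Inf (cost ` T)"
    unfolding fcM_def
  proof (rule arg_cong[of _ _ Inf], intro equalityI subsetI)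
    fix e assume "e \<in> {ereal (of_int (\<Sum>j<n. c j * x j)) | x. (\<forall>j<n. 0 \<le> x j) \<and> (\<forall>i<m. (\<Sum>j<n. M i j * x j) = z i)}"
    then obtain x where x: "\<forall>j<n. 0 \<le> x j" "\<forall>i<m. (\<Sum>j<n. M i j * x j) = z i" "e = cost x"
      by (auto simp: cost_def)
    \<comment> \<open>Entries beyond n are invisible to the definition of fcM, so reset them to 0.\<close>
    define x0 where "x0 j = (if j < n then x j else 0)" for j
    have "x0 \<in> T" using x by (auto simp: T_def x0_def degree_def)
    moreover have "cost x0 = cost x" by (simp add: cost_def x0_def)
    ultimately show "e \<in> cost ` T" using x by (metis image_eqI)
  qed (auto simp: T_def cost_def degree_def)
  moreover have "T \<subseteq> {x. admissible m n M z z x}" by (auto simp: T_def admissible_def)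
  then have "finite (cost ` T)" using finite_admissible[OF G] by (intro finite_imageI) (rule finite_subset)
  moreover have "T \<noteq> {}" using assms(2) calculation(1) by (auto simp: top_ereal_def)
  ultimately have "fcM m n c M z \<in> cost ` T" using Min_in[of "cost ` T"] cInf_eq_Min[of "cost ` T"] by simp
  then show ?thesis by (auto simp: T_def cost_def)
qed

lemma fcM_attained_family:
  assumes G: "simple_graph_incidence m n M" and "\<forall>k\<in>P. fcM m n c M (zs k) \<noteq> \<infinity>"
  shows "\<exists>X. \<forall>k\<in>P. (\<forall>j<n. 0 \<le> X k j) \<and> (\<forall>j\<ge>n. X k j = 0) \<and>
    (\<forall>i<m. degree n M (X k) i = zs k i) \<and> fcM m n c M (zs k) = ereal (of_int (\<Sum>j<n. c j * X k j))"
  using fcM_attained[OF G] assms(2) by (intro bchoice) simp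

lemma sum_over_positive_weights:
  fixes lam :: "'a \<Rightarrow> real"
  assumes "finite K" "\<forall>k\<in>K. 0 \<le> lam k" "\<forall>k\<in>K. lam k = 0 \<longrightarrow> g k = 0"
  shows "(\<Sum>k\<in>K. g k) = (\<Sum>k\<in>{k\<in>K. 0 < lam k}. g k)"
  using assms by (intro sum.mono_neutral_right) (auto simp: order_less_le)

lemma fcM_convex_combination:
  assumes G: "simple_graph_incidence m n M" and "finite K"
    and lam_nonneg: "\<forall>k\<in>K. 0 \<le> lam k" and lam_sum: "(\<Sum>k\<in>K. lam k) = 1"
    and parity: "\<forall>k\<in>K. \<forall>i<m. zs k i mod 2 = z i mod 2"
    and z_avg: "\<forall>i<m. real_of_int (z i) = (\<Sum>k\<in>K. lam k * real_of_int (zs k i))"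
  shows "fcM m n c M z \<le> (\<Sum>k\<in>K. ereal (lam k) * fcM m n c M (zs k))"
proof -
  define P where "P = {k\<in>K. 0 < lam k}"
  have "finite P" and "P \<subseteq> K" using \<open>finite K\<close> by (auto simp: P_def)
  note on_P = sum_over_positive_weights[OF \<open>finite K\<close> lam_nonneg, folded P_def]
  show ?thesis
  proof (cases "\<exists>k\<in>P. fcM m n c M (zs k) = \<infinity>")
    case True
    then have "(\<Sum>k\<in>K. ereal (lam k) * fcM m n c M (zs k)) = \<infinity>"
      using \<open>finite K\<close> by (auto simp: sum_Pinfty P_def)
    then show ?thesis by simp
  next
    case False
    then have "\<forall>k\<in>P. fcM m n c M (zs k) \<noteq> \<infinity>" by blast
    from fcM_attained_family[OF G this] obtain X where X: "\<forall>k\<in>P. (\<forall>j<n. 0 \<le> X k j) \<and> (\<forall>j\<ge>n. X k j = 0) \<and>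
        (\<forall>i<m. degree n M (X k) i = zs k i) \<and> fcM m n c M (zs k) = ereal (of_int (\<Sum>j<n. c j * X k j))"
      by blast
    have z_avg_P: "real_of_int (z i) = (\<Sum>k\<in>P. lam k * real_of_int (degree n M (X k) i))" if "i < m" for i
      using z_avg on_P[of "\<lambda>k. lam k * real_of_int (zs k i)"] X that by (simp cong: sum.cong)
    obtain y where y: "\<forall>j<n. 0 \<le> y j" "\<forall>i<m. degree n M y i = z i"
      and cost_y: "real_of_int (\<Sum>j<n. c j * y j) \<le> (\<Sum>k\<in>P. lam k * real_of_int (\<Sum>j<n. c j * X k j))"
    proof (rule exact_vector_below_average_cost[OF G \<open>finite P\<close>])
      show "\<forall>k\<in>P. 0 \<le> lam k" "(\<Sum>k\<in>P. lam k) = 1" using lam_nonneg lam_sum on_P[of lam] \<open>P \<subseteq> K\<close> by auto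
      show "\<forall>k\<in>P. (\<forall>j<n. 0 \<le> X k j) \<and> (\<forall>j\<ge>n. X k j = 0) \<and> (\<forall>i<m. degree n M (X k) i mod 2 = z i mod 2)"
        using X parity \<open>P \<subseteq> K\<close> by auto
      show "\<forall>i<m. real_of_int (z i) = (\<Sum>k\<in>P. lam k * real_of_int (degree n M (X k) i))"
        using z_avg_P by blast
    qed
    have "fcM m n c M z \<le> ereal (of_int (\<Sum>j<n. c j * y j))" using fcM_le[OF y] .
    also have "\<dots> \<le> ereal (\<Sum>k\<in>P. lam k * real_of_int (\<Sum>j<n. c j * X k j))" using cost_y by simp
    also have "\<dots> = (\<Sum>k\<in>P. ereal (lam k) * fcM m n c M (zs k))"
      unfolding sum_ereal[symmetric] using X by (intro sum.cong) auto
    also have "\<dots> = (\<Sum>k\<in>K. ereal (lam k) * fcM m n c M (zs k))"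
      using on_P[of "\<lambda>k. ereal (lam k) * fcM m n c M (zs k)"] by (simp flip: zero_ereal_def)
    finally show ?thesis .
  qed
qed

theorem lemma7:
  fixes m n l :: nat
    and M :: "nat \<Rightarrow> nat \<Rightarrow> int"
    and c r z :: "nat \<Rightarrow> int"
    and zs :: "nat \<Rightarrow> nat \<Rightarrow> int"
    and lam :: "nat \<Rightarrow> real"
  assumes "simple_graph_incidence m n M"
    and "\<forall>k<l. \<forall>i<m. zs k i mod 2 = r i mod 2"
    and "\<forall>k<l. 0 \<le> lam k"
    and "(\<Sum>k<l. lam k) = 1"
    and "\<forall>i<m. real_of_int (z i) = (\<Sum>k<l. lam k * real_of_int (zs k i))"
    and "\<forall>i<m. z i mod 2 = r i mod 2"
  shows "fcM m n c M z \<le> (\<Sum>k<l. ereal (lam k) * fcM m n c M (zs k))"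
  using fcM_convex_combination[OF assms(1) finite_lessThan] assms(2-6) by simp

end
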